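(* For all $d,m\in\mathbb{N}$ there exist $c'=c'(d,m)$ and $d'=d'(d,m)$ such that for every $n\ge m$, every polynomial map $p:\mathbb{R}^n\to\mathbb{R}^m$ with components of degree at most $d$, and every $\Lambda=(\Lambda_1,\dots,\Lambda_m)\in\mathbb{R}^m_+$, the set $C^\Lambda(p)$ is closed and semialgebraic with diagram $D(C^\Lambda(p))=(n,c',d')$.
   Context: $C^\Lambda(p)=\{x\in\mathbb{R}^n:\sigma_i(D_xp)\le\Lambda_i\ \forall i=1,\dots,m\}$, where $\sigma_i(L)=\lambda_i(LL^\top)^{1/2}$ are the singular values (eigenvalues in decreasing order). A set $S\subset\mathbb{R}^n$ is semialgebraic if $S=\bigcup_{i=1}^a\bigcap_{j=1}^{b_i}\{x:\mathrm{sign}(p_{ij}(x))=\sigma_{ij}\}$ for polynomials $p_{ij}$ and $\sigma_{ij}\in\{0,1,-1\}$; "$D(S)=(n,c',d')$" means $S$ admits such a representation with $a\cdot\max_ib_i\le c'$ and $\max_{i,j}\deg p_{ij}\le d'$. *)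

theory Defs
  imports "HOL-Analysis.Analysis" "Jordan_Normal_Form.Char_Poly"
begin

text \<open>Euclidean space R^n rendered as functions nat => real that vanish from index n on.
  The topology on nat => real is the product topology (HOL-Analysis), whose restriction
  to this (closed) subspace is the Euclidean topology of R^n.\<close>
definition Rn :: "nat \<Rightarrow> (nat \<Rightarrow> real) set" where
  "Rn n = {x. \<forall>i\<ge>n. x i = 0}"

definition poly_fun :: "nat \<Rightarrow> nat \<Rightarrow> ((nat \<Rightarrow> real) \<Rightarrow> real) \<Rightarrow> bool" where
  "poly_fun n d f \<longleftrightarrow>
     (\<exists>(A :: (nat \<Rightarrow> nat) set) (c :: (nat \<Rightarrow> nat) \<Rightarrow> real).
        finite A \<and> (\<forall>\<alpha>\<in>A. (\<forall>i\<ge>n. \<alpha> i = 0) \<and> (\<Sum>i<n. \<alpha> i) \<le> d) \<and>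
        (\<forall>x. f x = (\<Sum>\<alpha>\<in>A. c \<alpha> * (\<Prod>i<n. x i ^ \<alpha> i))))"

definition poly_map :: "nat \<Rightarrow> nat \<Rightarrow> nat \<Rightarrow> (nat \<Rightarrow> (nat \<Rightarrow> real) \<Rightarrow> real) \<Rightarrow> bool" where
  "poly_map n m d p \<longleftrightarrow> (\<forall>j<m. poly_fun n d (p j))"

definition jacobian :: "nat \<Rightarrow> nat \<Rightarrow> (nat \<Rightarrow> (nat \<Rightarrow> real) \<Rightarrow> real) \<Rightarrow> (nat \<Rightarrow> real) \<Rightarrow> real mat" where
  "jacobian n m p x = mat m n (\<lambda>(j, i). deriv (\<lambda>t. p j (x(i := t))) (x i))"

text \<open>Eigenvalues (with multiplicity) of a square real matrix whose characteristic polynomial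
  splits over the reals, listed in decreasing order.\<close>
definition eigenvalues_desc :: "real mat \<Rightarrow> real list" where
  "eigenvalues_desc M = (THE ls. length ls = dim_row M \<and> sorted_wrt (\<ge>) ls \<and>
      char_poly M = prod_list (map (\<lambda>l. [:- l, 1:]) ls))"

text \<open>Singular values sigma_i(L) = lambda_i(L L^T)^(1/2), i = 0, ..., (rows L) - 1 (0-based).\<close>
definition singular_value :: "real mat \<Rightarrow> nat \<Rightarrow> real" where
  "singular_value L i = sqrt (eigenvalues_desc (L * transpose_mat L) ! i)"

definition C_Lambda :: "nat \<Rightarrow> nat \<Rightarrow> (nat \<Rightarrow> real) \<Rightarrow> (nat \<Rightarrow> (nat \<Rightarrow> real) \<Rightarrow> real) \<Rightarrow> (nat \<Rightarrow> real) set" where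
  "C_Lambda n m \<Lambda> p = {x \<in> Rn n. \<forall>i<m. singular_value (jacobian n m p x) i \<le> \<Lambda> i}"

definition semialg_diagram :: "nat \<Rightarrow> nat \<Rightarrow> nat \<Rightarrow> (nat \<Rightarrow> real) set \<Rightarrow> bool" where
  "semialg_diagram n c' d' S \<longleftrightarrow>
     (\<exists>(a :: nat) (b :: nat \<Rightarrow> nat) (q :: nat \<Rightarrow> nat \<Rightarrow> (nat \<Rightarrow> real) \<Rightarrow> real)
        (\<sigma> :: nat \<Rightarrow> nat \<Rightarrow> real).
        (\<forall>i<a. \<forall>j<b i. poly_fun n d' (q i j) \<and> \<sigma> i j \<in> {0, 1, -1}) \<and>
        a * Max (b ` {..<a}) \<le> c' \<and>
        S = (\<Union>i<a. {x \<in> Rn n. \<forall>j<b i. sgn (q i j x) = \<sigma> i j}))"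

end

theory Submission
  imports Defs
begin

(* The singular values of J = D_x p are the square roots of the eigenvalues of the Gram matrix
   G = J J^T, so sigma_i(J) <= Lambda_i iff at most i eigenvalues of G exceed Lambda_i^2.
   G is symmetric, so its characteristic polynomial is real-rooted, and for real-rooted
   polynomials Descartes' rule of signs is exact: multiplying by X - a with a > 0 adds a sign
   change, so V(p(y)) and V(p(-y)) bound the numbers of positive and negative roots from below,
   while V(p(y)) + V(p(-y)) <= deg p - (multiplicity of the root 0).  Hence the number of
   eigenvalues of G above t is the number of sign changes among the coefficients of
   y -> det((y + t) I - G).  By Lagrange interpolation at y = 0, ..., m these m + 1 coefficients
   are polynomials in x of degree at most 2 m d.  So C^Lambda(p) is defined by a condition on the
   sign vector of m (m + 1) fixed polynomials, which yields the semialgebraic description, and it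
   is closed because having at least i + 1 sign changes is an open condition. *)

section \<open>Polynomial functions\<close>

definition monomial_exponent :: "nat \<Rightarrow> nat \<Rightarrow> (nat \<Rightarrow> nat) \<Rightarrow> bool" where
  "monomial_exponent n d \<alpha> \<longleftrightarrow> (\<forall>i\<ge>n. \<alpha> i = 0) \<and> (\<Sum>i<n. \<alpha> i) \<le> d"

definition monomial_fun :: "nat \<Rightarrow> (nat \<Rightarrow> nat) \<Rightarrow> (nat \<Rightarrow> real) \<Rightarrow> real" where
  "monomial_fun n \<alpha> x = (\<Prod>i<n. x i ^ \<alpha> i)"

lemma poly_funI:
  fixes K :: "'k set" and \<alpha> :: "'k \<Rightarrow> nat \<Rightarrow> nat"
  assumes "finite K"
    and "\<And>k. k \<in> K \<Longrightarrow> monomial_exponent n d (\<alpha> k)"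
    and "\<And>x. f x = (\<Sum>k\<in>K. c k * monomial_fun n (\<alpha> k) x)"
  shows "poly_fun n d f"
  unfolding poly_fun_def
proof (intro exI conjI allI)
  show "finite (\<alpha> ` K)" "\<forall>\<beta>\<in>\<alpha> ` K. (\<forall>i\<ge>n. \<beta> i = 0) \<and> (\<Sum>i<n. \<beta> i) \<le> d"
    using assms(1,2) unfolding monomial_exponent_def by auto
  fix x
  have "f x = (\<Sum>\<beta>\<in>\<alpha> ` K. \<Sum>k\<in>{k\<in>K. \<alpha> k = \<beta>}. c k * monomial_fun n (\<alpha> k) x)"
    unfolding assms(3) by (rule sum.image_gen[OF assms(1)])
  also have "\<dots> = (\<Sum>\<beta>\<in>\<alpha> ` K. (\<Sum>k\<in>{k\<in>K. \<alpha> k = \<beta>}. c k) * monomial_fun n \<beta> x)"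
    by (simp add: sum_distrib_right)
  finally show "f x = (\<Sum>\<beta>\<in>\<alpha> ` K. (\<Sum>k\<in>{k\<in>K. \<alpha> k = \<beta>}. c k) * (\<Prod>i<n. x i ^ \<beta> i))"
    by (simp add: monomial_fun_def)
qed

lemma poly_funE:
  assumes "poly_fun n d f"
  obtains A c where "finite A" "\<And>\<alpha>. \<alpha> \<in> A \<Longrightarrow> monomial_exponent n d \<alpha>"
    "\<And>x. f x = (\<Sum>\<alpha>\<in>A. c \<alpha> * monomial_fun n \<alpha> x)"
  using assms unfolding poly_fun_def monomial_fun_def monomial_exponent_def by blast

lemma poly_fun_const: "poly_fun n d (\<lambda>x. a)"
  by (rule poly_funI[where K="{()}" and \<alpha>="\<lambda>_ _. 0" and c="\<lambda>_. a"])
    (auto simp: monomial_fun_def monomial_exponent_def)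

lemma poly_fun_add:
  assumes "poly_fun n d f" "poly_fun n d g"
  shows "poly_fun n d (\<lambda>x. f x + g x)"
proof -
  obtain A c where A: "finite A" "\<And>\<alpha>. \<alpha> \<in> A \<Longrightarrow> monomial_exponent n d \<alpha>"
    "\<And>x. f x = (\<Sum>\<alpha>\<in>A. c \<alpha> * monomial_fun n \<alpha> x)" using poly_funE[OF assms(1)] by blast
  obtain B c' where B: "finite B" "\<And>\<alpha>. \<alpha> \<in> B \<Longrightarrow> monomial_exponent n d \<alpha>"
    "\<And>x. g x = (\<Sum>\<alpha>\<in>B. c' \<alpha> * monomial_fun n \<alpha> x)" using poly_funE[OF assms(2)] by blast
  show ?thesis
  proof (rule poly_funI[where K="A <+> B" and \<alpha>="case_sum id id" and c="case_sum c c'"])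
    show "f x + g x = (\<Sum>k\<in>A <+> B. case_sum c c' k * monomial_fun n (case_sum id id k) x)" for x
      using A(1) B(1) unfolding Plus_def A(3) B(3)
      by (subst sum.union_disjoint) (auto simp: sum.reindex)
  qed (use A B in auto)
qed

lemma poly_fun_cmult:
  assumes "poly_fun n d f"
  shows "poly_fun n d (\<lambda>x. a * f x)"
proof -
  obtain A c where A: "finite A" "\<And>\<alpha>. \<alpha> \<in> A \<Longrightarrow> monomial_exponent n d \<alpha>"
    "\<And>x. f x = (\<Sum>\<alpha>\<in>A. c \<alpha> * monomial_fun n \<alpha> x)" using poly_funE[OF assms] by blast
  show ?thesis
    by (rule poly_funI[where K=A and \<alpha>=id and c="\<lambda>\<alpha>. a * c \<alpha>"])
      (use A in \<open>auto simp: sum_distrib_left mult.assoc\<close>)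
qed

lemma poly_fun_mult:
  assumes "poly_fun n d1 f" "poly_fun n d2 g"
  shows "poly_fun n (d1 + d2) (\<lambda>x. f x * g x)"
proof -
  obtain A c where A: "finite A" "\<And>\<alpha>. \<alpha> \<in> A \<Longrightarrow> monomial_exponent n d1 \<alpha>"
    "\<And>x. f x = (\<Sum>\<alpha>\<in>A. c \<alpha> * monomial_fun n \<alpha> x)" using poly_funE[OF assms(1)] by blast
  obtain B c' where B: "finite B" "\<And>\<alpha>. \<alpha> \<in> B \<Longrightarrow> monomial_exponent n d2 \<alpha>"
    "\<And>x. g x = (\<Sum>\<alpha>\<in>B. c' \<alpha> * monomial_fun n \<alpha> x)" using poly_funE[OF assms(2)] by blast
  have monomial_add: "monomial_fun n (\<lambda>i. \<alpha> i + \<beta> i) x = monomial_fun n \<alpha> x * monomial_fun n \<beta> x"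
    for \<alpha> \<beta> x by (simp add: monomial_fun_def power_add prod.distrib)
  show ?thesis
  proof (rule poly_funI[where K="A \<times> B" and \<alpha>="\<lambda>(\<alpha>, \<beta>) i. \<alpha> i + \<beta> i" and c="\<lambda>(\<alpha>, \<beta>). c \<alpha> * c' \<beta>"])
    show "f x * g x = (\<Sum>k\<in>A \<times> B. (case k of (\<alpha>, \<beta>) \<Rightarrow> c \<alpha> * c' \<beta>) *
      monomial_fun n (case k of (\<alpha>, \<beta>) \<Rightarrow> \<lambda>i. \<alpha> i + \<beta> i) x)" for x
      unfolding A(3) B(3) sum_product sum.cartesian_product
      by (rule sum.cong) (auto simp: monomial_add)
  next
    fix k assume "k \<in> A \<times> B"
    then obtain \<alpha> \<beta> where k: "k = (\<alpha>, \<beta>)" "\<alpha> \<in> A" "\<beta> \<in> B" by auto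
    show "monomial_exponent n (d1 + d2) (case k of (\<alpha>, \<beta>) \<Rightarrow> \<lambda>i. \<alpha> i + \<beta> i)"
      using A(2)[OF k(2)] B(2)[OF k(3)] by (simp add: k sum.distrib monomial_exponent_def)
  qed (use A B in auto)
qed

lemma poly_fun_sum:
  assumes "finite I" "\<And>i. i \<in> I \<Longrightarrow> poly_fun n d (f i)"
  shows "poly_fun n d (\<lambda>x. \<Sum>i\<in>I. f i x)"
  using assms by (induction I rule: finite_induct) (simp_all add: poly_fun_const poly_fun_add)

lemma poly_fun_prod:
  assumes "finite I" "\<And>i. i \<in> I \<Longrightarrow> poly_fun n d (f i)"
  shows "poly_fun n (card I * d) (\<lambda>x. \<Prod>i\<in>I. f i x)"
  using assms
proof (induction I rule: finite_induct)
  case empty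
  then show ?case by (simp add: poly_fun_const)
next
  case (insert a F)
  have "poly_fun n (d + card F * d) (\<lambda>x. f a x * (\<Prod>i\<in>F. f i x))"
    by (rule poly_fun_mult) (use insert in auto)
  then show ?case using insert by simp
qed

lemma continuous_on_poly_fun:
  assumes "poly_fun n d f"
  shows "continuous_on UNIV f"
proof -
  obtain A c where "\<And>x. f x = (\<Sum>\<alpha>\<in>A. c \<alpha> * monomial_fun n \<alpha> x)"
    using poly_funE[OF assms] by metis
  then have "f = (\<lambda>x. \<Sum>\<alpha>\<in>A. c \<alpha> * (\<Prod>i<n. x i ^ \<alpha> i))"
    unfolding monomial_fun_def by (rule ext)
  then show ?thesis
    by (simp only:) (intro continuous_on_sum continuous_on_mult continuous_on_const
        continuous_on_prod continuous_on_power continuous_on_product_coordinates)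
qed

lemma monomial_fun_upd:
  assumes "i < n"
  shows "monomial_fun n \<alpha> (x(i := t)) = t ^ \<alpha> i * (\<Prod>j\<in>{..<n}-{i}. x j ^ \<alpha> j)"
proof -
  have "monomial_fun n \<alpha> (x(i := t)) = t ^ \<alpha> i * (\<Prod>j\<in>{..<n}-{i}. (x(i := t)) j ^ \<alpha> j)"
    unfolding monomial_fun_def using assms by (subst prod.remove[of _ i]) auto
  also have "(\<Prod>j\<in>{..<n}-{i}. (x(i := t)) j ^ \<alpha> j) = (\<Prod>j\<in>{..<n}-{i}. x j ^ \<alpha> j)"
    by (rule prod.cong) auto
  finally show ?thesis .
qed

lemma DERIV_monomial_fun_upd:
  assumes "i < n"
  shows "((\<lambda>t. monomial_fun n \<alpha> (x(i := t))) has_real_derivative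
           real (\<alpha> i) * monomial_fun n (\<alpha>(i := \<alpha> i - 1)) x) (at (x i))"
proof -
  define R where "R = (\<Prod>j\<in>{..<n}-{i}. x j ^ \<alpha> j)"
  have "(\<Prod>j\<in>{..<n}-{i}. x j ^ (\<alpha>(i := \<alpha> i - 1)) j) = R"
    unfolding R_def by (rule prod.cong) auto
  then have "monomial_fun n (\<alpha>(i := \<alpha> i - 1)) x = x i ^ (\<alpha> i - 1) * R"
    using monomial_fun_upd[OF assms, of "\<alpha>(i := \<alpha> i - 1)" x "x i"] by simp
  moreover have "((\<lambda>t. t ^ \<alpha> i * R) has_real_derivative real (\<alpha> i) * x i ^ (\<alpha> i - 1) * R) (at (x
      i))"
    by (rule DERIV_cmult_right) (use DERIV_pow[of "\<alpha> i" "x i"] in simp)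
  ultimately show ?thesis
    unfolding monomial_fun_upd[OF assms] R_def by (simp add: mult.assoc)
qed

lemma poly_fun_partial_deriv:
  assumes "poly_fun n d f" "i < n"
  shows "poly_fun n d (\<lambda>x. deriv (\<lambda>t. f (x(i := t))) (x i))"
proof -
  obtain A c where A: "finite A" "\<And>\<alpha>. \<alpha> \<in> A \<Longrightarrow> monomial_exponent n d \<alpha>"
    "\<And>x. f x = (\<Sum>\<alpha>\<in>A. c \<alpha> * monomial_fun n \<alpha> x)" using poly_funE[OF assms(1)] by blast
  have "((\<lambda>t. f (x(i := t))) has_real_derivative
      (\<Sum>\<alpha>\<in>A. c \<alpha> * (real (\<alpha> i) * monomial_fun n (\<alpha>(i := \<alpha> i - 1)) x))) (at (x i))" for x
    unfolding A(3)
    by (intro DERIV_sum DERIV_cmult DERIV_monomial_fun_upd assms(2))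
  then have deriv_eq: "deriv (\<lambda>t. f (x(i := t))) (x i) =
      (\<Sum>\<alpha>\<in>A. (c \<alpha> * real (\<alpha> i)) * monomial_fun n (\<alpha>(i := \<alpha> i - 1)) x)" for x
    by (simp add: DERIV_imp_deriv mult.assoc)
  show ?thesis
  proof (rule poly_funI[OF A(1) _ deriv_eq])
    fix \<alpha> assume "\<alpha> \<in> A"
    moreover have "(\<Sum>j<n. (\<alpha>(i := \<alpha> i - 1)) j) \<le> (\<Sum>j<n. \<alpha> j)" by (rule sum_mono) auto
    ultimately show "monomial_exponent n d (\<alpha>(i := \<alpha> i - 1))"
      using A(2) assms(2) unfolding monomial_exponent_def by fastforce
  qed
qed

definition lagrange_basis :: "nat \<Rightarrow> nat \<Rightarrow> real poly" where
  "lagrange_basis m l =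
     Polynomial.smult (1 / (\<Prod>j\<in>{..m}-{l}. real l - real j)) (\<Prod>j\<in>{..m}-{l}. [:-real j, 1:])"

lemma poly_lagrange_basis:
  assumes "i \<le> m"
  shows "poly (lagrange_basis m l) (real i) = (if i = l then 1 else 0)"
proof (cases "i = l")
  case True
  have "(\<Prod>j\<in>{..m}-{l}. real l - real j) \<noteq> 0" by (simp add: prod_zero_iff)
  then show ?thesis using True unfolding lagrange_basis_def by (simp add: poly_prod)
next
  case False
  then have "(\<Prod>j\<in>{..m}-{l}. real i - real j) = 0" using assms by (intro prod_zero) auto
  then show ?thesis using False unfolding lagrange_basis_def by (simp add: poly_prod)
qed

lemma degree_lagrange_basis:
  assumes "l \<le> m"
  shows "degree (lagrange_basis m l) \<le> m"
proof -
  have "degree (\<Prod>j\<in>{..m}-{l}. [:-real j, 1:]) \<le> sum (degree \<circ> (\<lambda>j. [:-real j, 1:])) ({..m}-{l})"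
    by (rule degree_prod_sum_le) simp
  also have "\<dots> = m" using assms by simp
  finally show ?thesis unfolding lagrange_basis_def using degree_smult_le order_trans by blast
qed

lemma lagrange_interpolation:
  assumes "degree g \<le> m"
  shows "g = (\<Sum>l\<le>m. Polynomial.smult (poly g (real l)) (lagrange_basis m l))"
proof (rule poly_eqI_degree[where A="real ` {..m}"])
  fix x assume "x \<in> real ` {..m}"
  then obtain i where i: "i \<le> m" "x = real i" by auto
  have "(\<Sum>l\<le>m. poly g (real l) * poly (lagrange_basis m l) (real i))
      = (\<Sum>l\<le>m. if l = i then poly g (real l) else 0)"
    by (intro sum.cong refl) (simp add: poly_lagrange_basis i(1))
  also have "\<dots> = poly g (real i)" using i(1) by simp
  finally show "poly g x = poly (\<Sum>l\<le>m. Polynomial.smult (poly g (real l)) (lagrange_basis m l)) x"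
    using i(2) by (simp add: poly_sum)
next
  have "degree (\<Sum>l\<le>m. Polynomial.smult (poly g (real l)) (lagrange_basis m l)) \<le> m"
    by (intro degree_sum_le order_trans[OF degree_smult_le degree_lagrange_basis]) auto
  then show "degree (\<Sum>l\<le>m. Polynomial.smult (poly g (real l)) (lagrange_basis m l))
      < card (real ` {..m})"
    by (simp add: card_image)
qed (use assms in \<open>simp add: card_image\<close>)

lemma coeff_lagrange_interpolation:
  "degree g \<le> m \<Longrightarrow> coeff g k = (\<Sum>l\<le>m. poly g (real l) * coeff (lagrange_basis m l) k)"
  by (subst lagrange_interpolation) (simp_all add: coeff_sum)

lemma poly_fun_det:
  assumes A: "\<And>x. A x \<in> carrier_mat m m"
    and entries: "\<And>i j. i < m \<Longrightarrow> j < m \<Longrightarrow> poly_fun n d (\<lambda>x. A x $$ (i, j))"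
  shows "poly_fun n (m * d) (\<lambda>x. det (A x))"
proof -
  have "(\<lambda>x. det (A x)) =
      (\<lambda>x. \<Sum>\<pi>\<in>{\<pi>. \<pi> permutes {0..<m}}. signof \<pi> * (\<Prod>i=0..<m. A x $$ (i, \<pi> i)))"
    by (intro ext det_def'[OF A])
  moreover have "poly_fun n (m * d)
      (\<lambda>x. \<Sum>\<pi>\<in>{\<pi>. \<pi> permutes {0..<m}}. signof \<pi> * (\<Prod>i=0..<m. A x $$ (i, \<pi> i)))"
  proof (intro poly_fun_sum poly_fun_cmult)
    show "finite {\<pi>. \<pi> permutes {0..<m}}" by (simp add: finite_permutations)
    fix \<pi> assume "\<pi> \<in> {\<pi>. \<pi> permutes {0..<m}}"
    then have "\<pi> i < m" if "i < m" for i using permutes_in_image that by fastforce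
    then have "poly_fun n (card {0..<m} * d) (\<lambda>x. \<Prod>i=0..<m. A x $$ (i, \<pi> i))"
      by (intro poly_fun_prod entries) auto
    then show "poly_fun n (m * d) (\<lambda>x. \<Prod>i=0..<m. A x $$ (i, \<pi> i))" by simp
  qed
  ultimately show ?thesis by simp
qed

lemma poly_fun_coeff_of_values:
  assumes "\<And>x. degree (g x) \<le> m" "\<And>l. l \<le> m \<Longrightarrow> poly_fun n d (\<lambda>x. poly (g x) (real l))"
  shows "poly_fun n d (\<lambda>x. coeff (g x) k)"
proof -
  have "(\<lambda>x. coeff (g x) k) = (\<lambda>x. \<Sum>l\<le>m. coeff (lagrange_basis m l) k * poly (g x) (real l))"
    using coeff_lagrange_interpolation[OF assms(1)] by (simp add: mult.commute)
  then show ?thesis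
    by (simp only:) (intro poly_fun_sum poly_fun_cmult; auto intro: assms(2))
qed

lemma poly_fun_shifted_char_poly_coeff:
  assumes A: "\<And>x. A x \<in> carrier_mat m m"
    and entries: "\<And>i j. i < m \<Longrightarrow> j < m \<Longrightarrow> poly_fun n d (\<lambda>x. A x $$ (i, j))"
  shows "poly_fun n (m * d) (\<lambda>x. coeff (pcompose (char_poly (A x)) [:t, 1:]) k)"
proof (rule poly_fun_coeff_of_values)
  show "degree (pcompose (char_poly (A x)) [:t, 1:]) \<le> m" for x
    using degree_monic_char_poly[OF A] by (simp add: degree_pcompose)
  fix l
  have "poly (pcompose (char_poly (A x)) [:t, 1:]) (real l)
      = det (- char_matrix (A x) (t + real l))" for x
    by (simp add: poly_pcompose char_poly_matrix[OF A])
  moreover have "poly_fun n (m * d) (\<lambda>x. det (- char_matrix (A x) (t + real l)))"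
  proof (rule poly_fun_det)
    show "- char_matrix (A x) (t + real l) \<in> carrier_mat m m" for x
      using A[of x] by (auto simp: char_matrix_def)
    fix i j assume ij: "i < m" "j < m"
    have "(- char_matrix (A x) (t + real l)) $$ (i, j) =
        (-1) * A x $$ (i, j) + (if i = j then t + real l else 0)" for x
      using A[of x] ij by (auto simp: char_matrix_def)
    then show "poly_fun n d (\<lambda>x. (- char_matrix (A x) (t + real l)) $$ (i, j))"
      by (simp only:) (intro poly_fun_add poly_fun_cmult poly_fun_const entries[OF ij])
  qed
  ultimately show "poly_fun n (m * d) (\<lambda>x. poly (pcompose (char_poly (A x)) [:t, 1:]) (real l))"
    by simp
qed

section \<open>Sign changes and Descartes' rule for real-rooted polynomials\<close>

definition alternating_indices :: "(nat \<Rightarrow> real) \<Rightarrow> nat \<Rightarrow> (nat \<Rightarrow> nat) \<Rightarrow> bool" where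
  "alternating_indices c r f \<longleftrightarrow> (\<forall>k<r. f k < f (Suc k) \<and> c (f k) * c (f (Suc k)) < 0)"

definition vanishes_above :: "(nat \<Rightarrow> real) \<Rightarrow> nat \<Rightarrow> bool" where
  "vanishes_above c N \<longleftrightarrow> (\<forall>k>N. c k = 0)"

text \<open>Only meaningful for sequences that vanish above some index; otherwise the greatest
  element need not exist.\<close>
definition sign_changes :: "(nat \<Rightarrow> real) \<Rightarrow> nat" where
  "sign_changes c = (GREATEST r. \<exists>f. alternating_indices c r f)"

lemma alternating_indices_mono: "alternating_indices c r f \<Longrightarrow> r' \<le> r \<Longrightarrow> alternating_indices c r' f"
  unfolding alternating_indices_def by auto

lemma alternating_indices_nonzero:
  assumes "alternating_indices c r f" "0 < r" "k \<le> r"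
  shows "c (f k) \<noteq> 0"
proof (cases "k < r")
  case True
  then show ?thesis using assms(1) unfolding alternating_indices_def by force
next
  case False
  then have "r - 1 < r" "k = Suc (r - 1)" using assms(2,3) by auto
  then show ?thesis using assms(1) unfolding alternating_indices_def by force
qed

lemma alternating_indices_gap:
  assumes "alternating_indices c r f" "k \<le> l" "l \<le> r"
  shows "f k + (l - k) \<le> f l"
  using assms(2,3)
proof (induction l)
  case (Suc l)
  show ?case
  proof (cases "k = Suc l")
    case False
    then have "f k + (l - k) \<le> f l" "f l < f (Suc l)"
      using Suc assms(1) unfolding alternating_indices_def by auto
    then show ?thesis using Suc.prems(1) False by linarith
  qed simp
qed simp

lemma alternating_indices_le:
  assumes "alternating_indices c r f" "0 < r" "k \<le> r" "vanishes_above c N"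
  shows "f k \<le> N"
  using alternating_indices_nonzero[OF assms(1-3)] assms(4) unfolding vanishes_above_def
  using not_le by blast

lemma alternating_indices_length_le:
  assumes "alternating_indices c r f" "vanishes_above c N"
  shows "r \<le> N"
proof (cases "r = 0")
  case False
  then have "f r \<le> N" using alternating_indices_le[OF assms(1) _ order_refl assms(2)] by simp
  moreover have "f 0 + r \<le> f r" using alternating_indices_gap[OF assms(1), of 0 r] by simp
  ultimately show ?thesis by linarith
qed simp

lemma sign_changes_ge:
  "alternating_indices c r f \<Longrightarrow> vanishes_above c N \<Longrightarrow> r \<le> sign_changes c"
  unfolding sign_changes_def
  by (rule Greatest_le_nat[where b=N]) (auto intro: alternating_indices_length_le)

lemma sign_changes_attained: "vanishes_above c N \<Longrightarrow> \<exists>f. alternating_indices c (sign_changes c) f"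
  unfolding sign_changes_def
  by (rule GreatestI_nat[where k=0 and b=N])
    (auto intro: alternating_indices_length_le simp: alternating_indices_def)

lemma sign_changes_le_iff:
  assumes "vanishes_above c N"
  shows "sign_changes c \<le> i \<longleftrightarrow> \<not> (\<exists>f. alternating_indices c (Suc i) f)"
proof
  assume "sign_changes c \<le> i"
  then show "\<not> (\<exists>f. alternating_indices c (Suc i) f)" using sign_changes_ge[OF _ assms] by fastforce
next
  assume "\<not> (\<exists>f. alternating_indices c (Suc i) f)"
  then show "sign_changes c \<le> i"
    using sign_changes_attained[OF assms] alternating_indices_mono not_less_eq_eq by blast
qed

lemma alternating_indices_sgn_cong:
  assumes "\<And>k. sgn (c k) = sgn (c' k)"
  shows "alternating_indices c r f \<longleftrightarrow> alternating_indices c' r f"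
proof -
  have "x * y < 0 \<longleftrightarrow> sgn x * sgn y < 0" for x y :: real
    by (simp add: sgn_mult[symmetric] sgn_less)
  then have "c a * c b < 0 \<longleftrightarrow> c' a * c' b < 0" for a b
    using assms[of a] assms[of b] by metis
  then show ?thesis unfolding alternating_indices_def by auto
qed

lemma sign_changes_cmult:
  assumes "s \<noteq> 0"
  shows "sign_changes (\<lambda>k. s * c k) = sign_changes c"
proof -
  have "s * s > 0" using assms not_real_square_gt_zero by blast
  then have "(s * s) * (x * y) < 0 \<longleftrightarrow> x * y < 0" for x y :: real
    using mult_less_cancel_left_pos[of "s * s" "x * y" 0] by simp
  moreover have "(s * x) * (s * y) = (s * s) * (x * y)" for x y :: real
    by (simp add: algebra_simps)
  ultimately have "(s * x) * (s * y) < 0 \<longleftrightarrow> x * y < 0" for x y :: real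
    by presburger
  then have "alternating_indices (\<lambda>k. s * c k) = alternating_indices c"
    unfolding alternating_indices_def by (intro ext) simp
  then show ?thesis unfolding sign_changes_def by simp
qed

lemma sign_changes_single:
  assumes "\<And>k. k \<noteq> n \<Longrightarrow> c k = 0"
  shows "sign_changes c = 0"
proof (rule ccontr)
  have "vanishes_above c n" using assms unfolding vanishes_above_def by simp
  then obtain f where f: "alternating_indices c (sign_changes c) f" using sign_changes_attained
    by blast
  assume "sign_changes c \<noteq> 0"
  then have "f 0 < f 1" "c (f 0) \<noteq> 0" "c (f 1) \<noteq> 0"
    using f alternating_indices_nonzero[OF f] unfolding alternating_indices_def by auto
  then have "f 0 = n" "f 1 = n" using assms by blast+
  then show False using \<open>f 0 < f 1\<close> by simp
qed

lemma vanishes_above_coeff: "vanishes_above (coeff p) (degree p)"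
  unfolding vanishes_above_def by (simp add: coeff_eq_0)

lemma coeff_linear_factor_mult:
  fixes h :: "'a::comm_ring_1 poly"
  shows
  "coeff ([:a, 1:] * h) k = a * coeff h k + (case k of 0 \<Rightarrow> 0 | Suc j \<Rightarrow> coeff h j)"
  by (cases k) simp_all

lemma coeff_linear_factor_mult_sign:
  fixes h :: "real poly"
  assumes "a > 0" "coeff h l * s > 0" "l = 0 \<or> coeff h (l - 1) * s \<le> 0"
  shows "coeff ([:-a, 1:] * h) l * s < 0"
proof (cases l)
  case 0
  then show ?thesis using assms(1,2) by (simp add: coeff_linear_factor_mult mult.assoc)
next
  case (Suc j)
  then have "coeff ([:-a, 1:] * h) l * s = coeff h j * s - a * (coeff h l * s)"
    by (simp add: coeff_linear_factor_mult algebra_simps)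
  also have "\<dots> < 0"
  proof -
    have "a * (coeff h l * s) > 0" using assms(1,2) by simp
    moreover have "coeff h j * s \<le> 0" using assms(3) Suc by simp
    ultimately show ?thesis by linarith
  qed
  finally show ?thesis .
qed

lemma coeff_linear_factor_mult_sign_between:
  fixes h :: "real poly"
  assumes "a > 0" "p \<le> q" "coeff h q * s > 0" "p = 0 \<or> coeff h (p - 1) * s < 0"
  shows "\<exists>l. p \<le> l \<and> l \<le> q \<and> coeff ([:-a, 1:] * h) l * s < 0"
proof -
  define l where "l = (LEAST l. p \<le> l \<and> coeff h l * s > 0)"
  have l: "p \<le> l" "coeff h l * s > 0" "l \<le> q"
    using LeastI[of "\<lambda>l. p \<le> l \<and> coeff h l * s > 0" q] Least_le[of _ q] assms(2,3)
    unfolding l_def by auto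
  have "l = 0 \<or> coeff h (l - 1) * s \<le> 0"
  proof (cases "l = p")
    case False
    then have "l - 1 < l" "p \<le> l - 1" using l(1) by auto
    then have "\<not> coeff h (l - 1) * s > 0"
      using not_less_Least[of "l - 1" "\<lambda>l. p \<le> l \<and> coeff h l * s > 0"] unfolding l_def by blast
    then show ?thesis by simp
  qed (use assms(4) in auto)
  then show ?thesis using coeff_linear_factor_mult_sign[OF assms(1) l(2)] l by blast
qed

lemma opposite_signs_trans:
  fixes x y u v :: real
  shows "x * u < 0 \<Longrightarrow> y * v < 0 \<Longrightarrow> u * v < 0 \<Longrightarrow> x * y < 0"
  by (auto simp: mult_less_0_iff)

lemma same_sign_trans:
  fixes x u v :: real
  shows "x * u < 0 \<Longrightarrow> u * v > 0 \<Longrightarrow> x * v < 0"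
  by (auto simp: mult_less_0_iff zero_less_mult_iff)

lemma linear_factor_mult_opposite_signs:
  fixes h :: "real poly"
  assumes a: "a > 0" and f: "alternating_indices (coeff h) r f"
    and nz: "\<And>k. k \<le> r \<Longrightarrow> coeff h (f k) \<noteq> 0"
  obtains g where "\<And>k. k \<le> r \<Longrightarrow>
    (k = 0 \<or> f (k - 1) < g k) \<and> g k \<le> f k \<and> coeff ([:-a, 1:] * h) (g k) * coeff h (f k) < 0"
proof -
  let ?b = "coeff h" and ?c = "coeff ([:-a, 1:] * h)"
  have "\<exists>l. (k = 0 \<or> f (k - 1) < l) \<and> l \<le> f k \<and> ?c l * ?b (f k) < 0" if k: "k \<le> r" for k
  proof -
    define p where "p = (if k = 0 then 0 else Suc (f (k - 1)))"
    have "p \<le> f k \<and> (p = 0 \<or> ?b (p - 1) * ?b (f k) < 0)"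
    proof (cases k)
      case (Suc j)
      then have "j < r" using k by simp
      then show ?thesis using f Suc unfolding alternating_indices_def p_def by (simp add: Suc_le_eq)
    qed (simp add: p_def)
    moreover have "?b (f k) * ?b (f k) > 0" using nz[OF k] not_real_square_gt_zero by blast
    ultimately obtain l where l: "p \<le> l" "l \<le> f k" "?c l * ?b (f k) < 0"
      using coeff_linear_factor_mult_sign_between[OF a, of p "f k" h "?b (f k)"] by blast
    moreover have "k = 0 \<or> f (k - 1) < l" using l(1) unfolding p_def by (cases "k = 0") simp_all
    ultimately show ?thesis by blast
  qed
  then show ?thesis using that someI_ex by (metis (no_types, lifting))
qed

lemma sign_changes_attained_last:
  assumes "vanishes_above b n" "b n \<noteq> 0"
  obtains f where "alternating_indices b (sign_changes b) f" "b (f (sign_changes b)) * b n > 0"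
proof (cases "sign_changes b = 0")
  case True
  moreover have "b n * b n > 0" using assms(2) not_real_square_gt_zero by blast
  ultimately show ?thesis using that[of "\<lambda>_. n"] by (simp add: alternating_indices_def)
next
  case False
  define r where "r = sign_changes b"
  obtain f where f: "alternating_indices b r f" using sign_changes_attained[OF assms(1)] r_def
    by blast
  have nz: "b (f r) \<noteq> 0" using alternating_indices_nonzero[OF f] False r_def by simp
  have "\<not> b (f r) * b n < 0"
  proof
    assume neg: "b (f r) * b n < 0"
    have "f r \<le> n" using alternating_indices_le[OF f _ order_refl assms(1)] False r_def by simp
    moreover have "f r \<noteq> n" using neg by (metis not_real_square_gt_zero less_asym assms(2))
    ultimately have "alternating_indices b (Suc r) (f(Suc r := n))"
      using f neg unfolding alternating_indices_def by (auto simp: less_Suc_eq)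
    then show False using sign_changes_ge[OF _ assms(1)] r_def by fastforce
  qed
  then have "b (f r) * b n > 0" using nz assms(2) by (simp add: not_less order_le_less)
  then show ?thesis using f that r_def by blast
qed

lemma alternating_indices_interleave:
  assumes f: "alternating_indices b r f"
    and g: "\<And>k. k \<le> r \<Longrightarrow> (k = 0 \<or> f (k - 1) < g k) \<and> g k \<le> f k \<and> c (g k) * b (f k) < 0"
    and last: "f r < N" "c (g r) * c N < 0"
  shows "alternating_indices c (Suc r) (\<lambda>k. if k \<le> r then g k else N)"
  unfolding alternating_indices_def
proof (intro allI impI)
  fix k assume k: "k < Suc r"
  show "(if k \<le> r then g k else N) < (if Suc k \<le> r then g (Suc k) else N) \<and>
      c (if k \<le> r then g k else N) * c (if Suc k \<le> r then g (Suc k) else N) < 0"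
  proof (cases "k < r")
    case True
    then have "b (f k) * b (f (Suc k)) < 0" using f unfolding alternating_indices_def by simp
    moreover have "c (g k) * b (f k) < 0" "c (g (Suc k)) * b (f (Suc k)) < 0"
      using True g[of k] g[of "Suc k"] by simp_all
    ultimately have "c (g k) * c (g (Suc k)) < 0" by (rule opposite_signs_trans[rotated 2])
    moreover have "g k < g (Suc k)" using True g[of k] g[of "Suc k"] by fastforce
    ultimately show ?thesis using True by simp
  next
    case False
    then have "k = r" using k by simp
    then show ?thesis using g[of r] last by simp
  qed
qed

lemma sign_changes_mult_linear_factor:
  fixes h :: "real poly"
  assumes "h \<noteq> 0" "a > 0"
  shows "sign_changes (coeff h) + 1 \<le> sign_changes (coeff ([:-a, 1:] * h))"
proof -
  define b c n r where "b = coeff h" and "c = coeff ([:-a, 1:] * h)" and "n = degree h"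
    and "r = sign_changes b"
  have bn: "b n \<noteq> 0" and vb: "vanishes_above b n"
    using assms(1) vanishes_above_coeff unfolding b_def n_def by auto
  have "degree ([:-a, 1:] * h) \<le> Suc n" using degree_mult_le[of "[:-a, 1:]" h] unfolding n_def
    by simp
  then have vc: "vanishes_above c (Suc n)" using vanishes_above_coeff[of "[:-a, 1:] * h"]
    unfolding c_def vanishes_above_def by simp
  have c_top: "c (Suc n) = b n"
    using vb unfolding c_def b_def vanishes_above_def by (simp add: coeff_linear_factor_mult)
  obtain f where f: "alternating_indices b r f" and last: "b (f r) * b n > 0"
    using sign_changes_attained_last[OF vb bn] r_def by blast
  have fnz: "b (f k) \<noteq> 0" if "k \<le> r" for k
    using alternating_indices_nonzero[OF f _ that] last that by (cases "r = 0") auto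
  obtain g where g: "\<And>k. k \<le> r \<Longrightarrow> (k = 0 \<or> f (k - 1) < g k) \<and> g k \<le> f k \<and> c (g k) * b (f k) < 0"
    using linear_factor_mult_opposite_signs[OF assms(2) f[unfolded b_def]] fnz unfolding b_def c_def
      by metis
  have "f r \<le> n" using fnz[of r] vb unfolding vanishes_above_def using not_le by blast
  moreover have "c (g r) * c (Suc n) < 0" using same_sign_trans[OF _ last] c_top g[of r] by simp
  ultimately have "alternating_indices c (Suc r) (\<lambda>k. if k \<le> r then g k else Suc n)"
    using g by (intro alternating_indices_interleave[OF f]) auto
  then have "Suc r \<le> sign_changes c" by (rule sign_changes_ge[OF _ vc])
  then show ?thesis unfolding r_def b_def c_def by simp
qed

lemma prod_linear_factors_nonzero: "(\<Prod>a\<leftarrow>as. [:- a, 1:]) \<noteq> (0 :: 'a::idom poly)"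
  by (induction as) (simp_all del: mult_pCons_left)

lemma sign_changes_mult_positive_roots:
  fixes h :: "real poly"
  assumes "h \<noteq> 0" "\<forall>a\<in>set as. a > 0"
  shows "sign_changes (coeff h) + length as \<le> sign_changes (coeff ((\<Prod>a\<leftarrow>as. [:-a, 1:]) * h))"
  using assms(2)
proof (induction as)
  case (Cons a as)
  have "(\<Prod>a\<leftarrow>as. [:-a, 1:]) * h \<noteq> 0"
    using assms(1) prod_linear_factors_nonzero by simp
  then have "sign_changes (coeff ((\<Prod>a\<leftarrow>as. [:-a, 1:]) * h)) + 1
      \<le> sign_changes (coeff ([:-a, 1:] * ((\<Prod>a\<leftarrow>as. [:-a, 1:]) * h)))"
    using Cons.prems by (intro sign_changes_mult_linear_factor) auto
  moreover have "(\<Prod>x\<leftarrow>a # as. [:-x, 1:]) * h = [:-a, 1:] * ((\<Prod>a\<leftarrow>as. [:-a, 1:]) * h)"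
    by (simp only: list.map prod_list.Cons mult.assoc)
  moreover have "sign_changes (coeff h) + length as \<le> sign_changes (coeff ((\<Prod>a\<leftarrow>as. [:-a, 1:]) * h))"
    using Cons by simp
  ultimately show ?case by (simp only: length_Cons)
qed simp

lemma positive_roots_le_sign_changes:
  "length (filter (\<lambda>\<mu>. \<mu> > 0) \<mu>s) \<le> sign_changes (coeff (\<Prod>\<mu>\<leftarrow>\<mu>s. [:-\<mu>, 1:]))"
proof -
  let ?pos = "filter (\<lambda>\<mu>. \<mu> > 0) \<mu>s" and ?nonpos = "filter (\<lambda>\<mu>. \<not> \<mu> > 0) \<mu>s"
  have split: "(\<Prod>\<mu>\<leftarrow>\<mu>s. [:-\<mu>, 1:]) = (\<Prod>\<mu>\<leftarrow>?pos. [:-\<mu>, 1:]) * (\<Prod>\<mu>\<leftarrow>?nonpos. [:-\<mu>, 1:] :: real poly)"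
    by (induction \<mu>s) (simp_all add: mult_ac del: mult_pCons_left)
  have "sign_changes (coeff (\<Prod>\<mu>\<leftarrow>?nonpos. [:-\<mu>, 1:])) + length ?pos
      \<le> sign_changes (coeff ((\<Prod>\<mu>\<leftarrow>?pos. [:-\<mu>, 1:]) * (\<Prod>\<mu>\<leftarrow>?nonpos. [:-\<mu>, 1:])))"
    by (rule sign_changes_mult_positive_roots[OF prod_linear_factors_nonzero]) simp
  then show ?thesis unfolding split by linarith
qed

lemma alternating_indices_truncate:
  assumes "alternating_indices c r f" "\<And>k. k \<le> r \<Longrightarrow> f k \<le> N"
  shows "alternating_indices (\<lambda>k. if k \<le> N then c k else 0) r f"
  using assms unfolding alternating_indices_def by auto

lemma alternating_indices_replace_last:
  assumes "alternating_indices c r f" "0 < r" "f (r - 1) < l" "c (f (r - 1)) * c l < 0"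
  shows "alternating_indices c r (f(r := l))"
  unfolding alternating_indices_def
proof (intro allI impI)
  fix k assume "k < r"
  then consider "Suc k = r" | "Suc k < r" by linarith
  then show "(f(r := l)) k < (f(r := l)) (Suc k) \<and> c ((f(r := l)) k) * c ((f(r := l)) (Suc k)) < 0"
  proof cases
    case 1
    then show ?thesis using assms(3,4) by (auto simp: diff_Suc_1[symmetric])
  next
    case 2
    then show ?thesis using assms(1) unfolding alternating_indices_def by simp
  qed
qed

lemma alternating_indices_below_gap:
  assumes f: "alternating_indices c r f" "0 < r" and c: "vanishes_above c n"
    and gap: "\<And>k. n' < k \<Longrightarrow> k < n \<Longrightarrow> c k = 0"
    and k: "k \<le> r" "k < r \<or> f k \<noteq> n"
  shows "f k \<le> n'"
proof -
  have "f k < f r" if "k < r" using alternating_indices_gap[OF f(1) _ order_refl, of k] that by simp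
  then have "f k \<noteq> n" using k alternating_indices_le[OF f order_refl c] by fastforce
  moreover have "f k \<le> n" using alternating_indices_le[OF f k(1) c] .
  ultimately have "f k < n" by simp
  moreover have "c (f k) \<noteq> 0" using alternating_indices_nonzero[OF f k(1)] .
  ultimately show ?thesis using gap[of "f k"] by (cases "n' < f k") auto
qed

lemma sign_changes_truncate:
  assumes c: "vanishes_above c n" "c n \<noteq> 0" and n': "n' < n" "c n' \<noteq> 0"
    and gap: "\<And>k. n' < k \<Longrightarrow> k < n \<Longrightarrow> c k = 0"
  shows "sign_changes c
    \<le> sign_changes (\<lambda>k. if k \<le> n' then c k else 0) + (if c n' * c n < 0 then 1 else 0)"
proof -
  define d where "d = (\<lambda>k. if k \<le> n' then c k else 0)"
  define r where "r = sign_changes c"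
  have vd: "vanishes_above d n'" unfolding d_def vanishes_above_def by simp
  obtain f where f: "alternating_indices c r f" using sign_changes_attained[OF c(1)] r_def by blast
  show ?thesis
  proof (cases "r = 0")
    case False
    then have below: "f k \<le> n'" if "k \<le> r" "k < r \<or> f k \<noteq> n" for k
      using alternating_indices_below_gap[OF f _ c(1) gap that] by simp
    consider "f r \<noteq> n" | "f r = n" "c n' * c n < 0" | "f r = n" "\<not> c n' * c n < 0" by blast
    then have "r \<le> sign_changes d + (if c n' * c n < 0 then 1 else 0)"
    proof cases
      case 1
      then have "alternating_indices d r f"
        unfolding d_def using below by (intro alternating_indices_truncate f) (auto simp: le_less)
      then show ?thesis using sign_changes_ge[OF _ vd] by fastforce
    next
      case 2
      have "f k \<le> n'" if "k \<le> r - 1" for k using that False by (intro below) auto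
      then have "alternating_indices d (r - 1) f"
        unfolding d_def by (intro alternating_indices_truncate alternating_indices_mono[OF f]) auto
      then show ?thesis using sign_changes_ge[OF _ vd] 2 by fastforce
    next
      case 3
      have "r - 1 < r" "Suc (r - 1) = r" using False by auto
      then have "c (f (r - 1)) * c n < 0" using f 3 unfolding alternating_indices_def by metis
      moreover have "c n * c n' > 0" using 3 c(2) n'(2)
        by (simp add: not_less order_le_less mult.commute)
      ultimately have flip: "c (f (r - 1)) * c n' < 0" by (rule same_sign_trans)
      then have "f (r - 1) \<noteq> n'" using not_square_less_zero by metis
      then have "f (r - 1) < n'" using below[of "r - 1"] \<open>r - 1 < r\<close> by simp
      then have "alternating_indices c r (f(r := n'))"
        using alternating_indices_replace_last[OF f] flip False by simp
      then have "alternating_indices d r (f(r := n'))"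
        unfolding d_def using below by (intro alternating_indices_truncate) (auto simp: le_less)
      then show ?thesis using sign_changes_ge[OF _ vd] by fastforce
    qed
    then show ?thesis unfolding r_def d_def .
  qed (simp add: r_def)
qed

lemma sign_changes_alternate_truncate:
  assumes c: "vanishes_above c n" "c n \<noteq> 0" and n': "n' < n" "c n' \<noteq> 0"
    and gap: "\<And>k. n' < k \<Longrightarrow> k < n \<Longrightarrow> c k = 0"
  defines "d \<equiv> \<lambda>k. if k \<le> n' then c k else 0"
  shows "sign_changes c + sign_changes (\<lambda>k. (-1) ^ k * c k)
    \<le> sign_changes d + sign_changes (\<lambda>k. (-1) ^ k * d k) + (n - n')"
proof -
  define alt where "alt c = (\<lambda>k. (-1::real) ^ k * c k)" for c :: "nat \<Rightarrow> real"
  have trunc: "sign_changes c \<le> sign_changes d + (if c n' * c n < 0 then 1 else 0)"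
    unfolding d_def by (rule sign_changes_truncate[OF c n' gap])
  have "vanishes_above (alt c) n"
    using c(1) unfolding alt_def vanishes_above_def by simp
  moreover have "alt c n \<noteq> 0" "alt c n' \<noteq> 0" unfolding alt_def using c(2) n'(2) by simp_all
  moreover have "alt c k = 0" if "n' < k" "k < n" for k unfolding alt_def using gap[OF that] by simp
  ultimately have "sign_changes (alt c)
      \<le> sign_changes (\<lambda>k. if k \<le> n' then alt c k else 0)
        + (if alt c n' * alt c n < 0 then 1 else 0)"
    using n'(1) by (intro sign_changes_truncate)
  moreover have "(\<lambda>k. if k \<le> n' then alt c k else 0) = alt d" unfolding alt_def d_def by auto
  moreover have "alt c n' * alt c n = (-1) ^ (n' + n) * (c n' * c n)"
    unfolding alt_def by (simp add: power_add algebra_simps)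
  ultimately have trunc_alt: "sign_changes (alt c)
      \<le> sign_changes (alt d) + (if (-1) ^ (n' + n) * (c n' * c n) < 0 then 1 else 0)"
    by simp
  have "(if c n' * c n < 0 then 1 else 0) + (if (-1) ^ (n' + n) * (c n' * c n) < 0 then 1 else 0)
      \<le> n - n'"
  proof (cases "n = Suc n'")
    case True
    have "c n' * c n \<noteq> 0" using n'(2) c(2) by simp
    then show ?thesis using True by auto
  qed (use n'(1) in auto)
  then show ?thesis using trunc trunc_alt unfolding alt_def by linarith
qed

lemma last_nonzero_below:
  fixes c :: "nat \<Rightarrow> 'a::zero"
  assumes "\<exists>k<n. c k \<noteq> 0"
  obtains n' where "n' < n" "c n' \<noteq> 0" "\<And>k. n' < k \<Longrightarrow> k < n \<Longrightarrow> c k = 0"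
proof -
  define n' where "n' = (GREATEST k. k < n \<and> c k \<noteq> 0)"
  have "n' < n" "c n' \<noteq> 0" using GreatestI_ex_nat[OF assms, of n] unfolding n'_def by auto
  moreover have "c k = 0" if "n' < k" "k < n" for k
    using Greatest_le_nat[of "\<lambda>k. k < n \<and> c k \<noteq> 0" k n] that unfolding n'_def by fastforce
  ultimately show ?thesis using that by blast
qed

lemma sign_changes_alternate_le:
  assumes "vanishes_above c n" "\<forall>k<z. c k = 0"
  shows "sign_changes c + sign_changes (\<lambda>k. (-1) ^ k * c k) \<le> n - z"
  using assms
proof (induction n arbitrary: c rule: less_induct)
  case (less n)
  show ?case
  proof (cases "\<exists>k<n. c k \<noteq> 0")
    case False
    then have only_n: "c k = 0" if "k \<noteq> n" for k
      using less.prems(1) that unfolding vanishes_above_def by (cases "k < n") auto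
    have "sign_changes c = 0" by (rule sign_changes_single[of n]) (simp add: only_n)
    moreover have "sign_changes (\<lambda>k. (-1) ^ k * c k) = 0"
      by (rule sign_changes_single[of n]) (simp add: only_n)
    ultimately show ?thesis by simp
  next
    case True
    obtain n' where n': "n' < n" "c n' \<noteq> 0" and gap: "\<And>k. n' < k \<Longrightarrow> k < n \<Longrightarrow> c k = 0"
      using last_nonzero_below[OF True] by blast
    have "z \<le> n'" using less.prems(2) n'(2) not_le by blast
    show ?thesis
    proof (cases "c n = 0")
      case True
      have "vanishes_above c n'"
        unfolding vanishes_above_def
      proof (intro allI impI)
        fix k assume "n' < k"
        then consider "k < n" | "k = n" | "n < k" by linarith
        then show "c k = 0" using gap \<open>n' < k\<close> True less.prems(1) unfolding vanishes_above_def
          by cases auto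
      qed
      then show ?thesis using less.IH[OF n'(1) _ less.prems(2)] n'(1) by fastforce
    next
      case False
      define d where "d = (\<lambda>k. if k \<le> n' then c k else 0)"
      have "vanishes_above d n'" "\<forall>k<z. d k = 0"
        using less.prems(2) unfolding d_def vanishes_above_def by simp_all
      then have "sign_changes d + sign_changes (\<lambda>k. (-1) ^ k * d k) \<le> n' - z"
        by (rule less.IH[OF n'(1)])
      moreover have "sign_changes c + sign_changes (\<lambda>k. (-1) ^ k * c k)
          \<le> sign_changes d + sign_changes (\<lambda>k. (-1) ^ k * d k) + (n - n')"
        unfolding d_def by (rule sign_changes_alternate_truncate[OF less.prems(1) False n' gap])
      ultimately show ?thesis using \<open>z \<le> n'\<close> n'(1) by linarith
    qed
  qed
qed

lemma vanishes_above_linear_factors: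
  "vanishes_above (coeff (\<Prod>\<mu>\<leftarrow>\<mu>s. [:-\<mu>, 1:] :: real poly)) (length \<mu>s)"
proof -
  have "degree (\<Prod>\<mu>\<leftarrow>\<mu>s. [:-\<mu>, 1:] :: real poly) \<le> length \<mu>s"
    using degree_prod_list_le[of "map (\<lambda>\<mu>. [:-\<mu>, 1:]) \<mu>s"] by (simp add: o_def sum_list_triv)
  then show ?thesis using vanishes_above_coeff unfolding vanishes_above_def by fastforce
qed

lemma coeff_linear_factors_uminus:
  "coeff (\<Prod>\<mu>\<leftarrow>\<mu>s. [:\<mu>, 1:]) k = (-1) ^ (length \<mu>s + k) * coeff (\<Prod>\<mu>\<leftarrow>\<mu>s. [:-\<mu>, 1:] :: real poly) k"
proof (induction \<mu>s arbitrary: k)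
  case Nil
  then show ?case by (cases k) simp_all
next
  case (Cons \<mu> \<mu>s)
  then show ?case
    by (cases k) (simp_all add: coeff_linear_factor_mult algebra_simps del: mult_pCons_left)
qed

lemma coeff_linear_factors_zero_roots:
  "k < length (filter (\<lambda>\<mu>. \<mu> = 0) \<mu>s) \<Longrightarrow> coeff (\<Prod>\<mu>\<leftarrow>\<mu>s. [:-\<mu>, 1:] :: real poly) k = 0"
proof (induction \<mu>s arbitrary: k)
  case (Cons \<mu> \<mu>s)
  let ?P = "\<Prod>\<mu>\<leftarrow>\<mu>s. [:-\<mu>, 1:] :: real poly"
  have "coeff ([:-\<mu>, 1:] * ?P) k = - \<mu> * coeff ?P k + (case k of 0 \<Rightarrow> 0 | Suc j \<Rightarrow> coeff ?P j)"
    by (rule coeff_linear_factor_mult)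
  moreover have "\<mu> = 0 \<or> coeff ?P k = 0" using Cons by (cases "\<mu> = 0") auto
  moreover have "(case k of 0 \<Rightarrow> 0 | Suc j \<Rightarrow> coeff ?P j) = 0"
    using Cons by (cases k) (auto split: if_splits)
  ultimately show ?case by (simp del: mult_pCons_left)
qed simp

theorem sign_changes_linear_factors:
  "sign_changes (coeff (\<Prod>\<mu>\<leftarrow>\<mu>s. [:-\<mu>, 1:] :: real poly)) = length (filter (\<lambda>\<mu>. \<mu> > 0) \<mu>s)"
proof -
  let ?P = "\<Prod>\<mu>\<leftarrow>\<mu>s. [:-\<mu>, 1:] :: real poly"
  let ?pos = "length (filter (\<lambda>\<mu>. \<mu> > 0) \<mu>s)" and ?neg = "length (filter (\<lambda>\<mu>. \<mu> < 0) \<mu>s)"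
    and ?zero = "length (filter (\<lambda>\<mu>. \<mu> = 0) \<mu>s)"
  have lower: "?pos \<le> sign_changes (coeff ?P)" by (rule positive_roots_le_sign_changes)
  have "length (filter (\<lambda>\<mu>. \<mu> > 0) (map uminus \<mu>s))
      \<le> sign_changes (coeff (\<Prod>\<mu>\<leftarrow>map uminus \<mu>s. [:-\<mu>, 1:]))"
    by (rule positive_roots_le_sign_changes)
  then have "?neg \<le> sign_changes (coeff (\<Prod>\<mu>\<leftarrow>\<mu>s. [:\<mu>, 1:]))"
    by (simp add: filter_map o_def)
  also have "coeff (\<Prod>\<mu>\<leftarrow>\<mu>s. [:\<mu>, 1:]) = (\<lambda>k. (-1) ^ length \<mu>s * ((-1) ^ k * coeff ?P k))"
    by (rule ext, subst coeff_linear_factors_uminus) (simp add: power_add)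
  also have "sign_changes \<dots> = sign_changes (\<lambda>k. (-1) ^ k * coeff ?P k)"
    by (simp add: sign_changes_cmult)
  finally have "?neg \<le> sign_changes (\<lambda>k. (-1) ^ k * coeff ?P k)" .
  moreover have "sign_changes (coeff ?P) + sign_changes (\<lambda>k. (-1) ^ k * coeff ?P k)
      \<le> length \<mu>s - ?zero"
    using vanishes_above_linear_factors coeff_linear_factors_zero_roots
    by (intro sign_changes_alternate_le) auto
  moreover have "?pos + ?neg + ?zero = length \<mu>s"
    by (induction \<mu>s) auto
  ultimately show ?thesis using lower by linarith
qed

section \<open>Eigenvalues of real symmetric matrices\<close>

lemma poly_linear_factors: "poly (\<Prod>a\<leftarrow>as. [:-a, 1:]) y = (\<Prod>a\<leftarrow>as. y - a)"
  for as :: "'a::comm_ring_1 list"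
  by (induction as) (simp_all add: algebra_simps)

lemma prod_list_map_remove1:
  fixes f :: "'a \<Rightarrow> 'b::comm_monoid_mult"
  shows "x \<in> set xs \<Longrightarrow> prod_list (map f xs) = f x * prod_list (map f (remove1 x xs))"
  by (induction xs) (auto simp: mult_ac)

lemma linear_factors_eq_imp_mset_eq:
  fixes xs ys :: "'a::idom list"
  assumes "(\<Prod>l\<leftarrow>xs. [:-l, 1:]) = (\<Prod>l\<leftarrow>ys. [:-l, 1:])"
  shows "mset xs = mset ys"
  using assms
proof (induction xs arbitrary: ys)
  case Nil
  show ?case
  proof (cases ys)
    case (Cons y ys')
    then have "poly (\<Prod>l\<leftarrow>ys. [:-l, 1:]) y = 0" unfolding poly_linear_factors by simp
    then show ?thesis using Nil by simp
  qed simp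
next
  case (Cons x xs)
  have "poly (\<Prod>l\<leftarrow>ys. [:-l, 1:]) x = 0" unfolding Cons.prems[symmetric] by simp
  then have x: "x \<in> set ys" unfolding poly_linear_factors by (auto simp: prod_list_zero_iff)
  have "[:-x, 1:] * (\<Prod>l\<leftarrow>xs. [:-l, 1:]) = [:-x, 1:] * (\<Prod>l\<leftarrow>remove1 x ys. [:-l, 1:])"
    using Cons.prems prod_list_map_remove1[OF x, of "\<lambda>l. [:-l, 1:]"] by (simp del: mult_pCons_left)
  then have "(\<Prod>l\<leftarrow>xs. [:-l, 1:]) = (\<Prod>l\<leftarrow>remove1 x ys. [:-l, 1:])"
    by (subst (asm) mult_left_cancel) auto
  then show ?case using Cons.IH x by simp
qed

lemma real_symmetric_eigenvalue_real:
  fixes M :: "real mat"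
  assumes M: "M \<in> carrier_mat m m" and sym: "transpose_mat M = M"
    and ev: "eigenvalue (map_mat complex_of_real M) a"
  shows "Im a = 0"
proof -
  let ?M = "\<lambda>i j. complex_of_real (M $$ (i, j))"
  obtain v where v: "v \<in> carrier_vec m" "v \<noteq> 0\<^sub>v m" "map_mat complex_of_real M *\<^sub>v v = a \<cdot>\<^sub>v v"
    using ev M unfolding eigenvalue_def eigenvector_def by auto
  have Mv: "(\<Sum>j=0..<m. ?M i j * v $ j) = a * v $ i" if "i < m" for i
    using arg_cong[OF v(3), of "\<lambda>w. w $ i"] that v(1) M by (simp add: scalar_prod_def mult.commute)
  have Msym: "M $$ (i, j) = M $$ (j, i)" if "i < m" "j < m" for i j
    using arg_cong[OF sym, of "\<lambda>A. A $$ (i, j)"] that M by simp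
  define N where "N = (\<Sum>i=0..<m. (cmod (v $ i))\<^sup>2)"
  define S where "S = (\<Sum>i=0..<m. \<Sum>j=0..<m. cnj (v $ i) * ?M i j * v $ j)"
  have "S = (\<Sum>i=0..<m. cnj (v $ i) * (a * v $ i))"
    unfolding S_def by (intro sum.cong refl) (simp add: Mv[symmetric] sum_distrib_left mult.assoc)
  also have "\<dots> = a * (\<Sum>i=0..<m. cnj (v $ i) * v $ i)" by (simp add: sum_distrib_left algebra_simps)
  also have "(\<Sum>i=0..<m. cnj (v $ i) * v $ i) = complex_of_real N"
    unfolding N_def of_real_sum by (intro sum.cong refl) (metis complex_norm_square mult.commute)
  finally have S_eq: "S = a * complex_of_real N" .
  have "cnj S = (\<Sum>i=0..<m. \<Sum>j=0..<m. v $ i * ?M i j * cnj (v $ j))"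
    unfolding S_def by simp
  also have "\<dots> = S"
    unfolding S_def
      by (subst sum.swap) (intro sum.cong refl, simp add: Msym mult.commute mult.left_commute)
  finally have "S \<in> \<real>" using Reals_cnj_iff by blast
  moreover have "N > 0"
  proof -
    obtain i where i: "i < m" "v $ i \<noteq> 0" using v(1,2)
      by (metis carrier_vecD eq_vecI index_zero_vec)
    have "(cmod (v $ i))\<^sup>2 \<le> N" unfolding N_def by (rule member_le_sum) (use i in auto)
    moreover have "(cmod (v $ i))\<^sup>2 > 0" using i by simp
    ultimately show ?thesis by linarith
  qed
  ultimately show ?thesis using S_eq by (simp add: complex_is_Real_iff)
qed

lemma char_poly_real_symmetric_splits:
  fixes M :: "real mat"
  assumes M: "M \<in> carrier_mat m m" and sym: "transpose_mat M = M"
  obtains ls where "length ls = m" "char_poly M = (\<Prod>l\<leftarrow>ls. [:-l, 1:])"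
proof -
  interpret map_poly_inj_comm_ring_hom complex_of_real ..
  let ?MC = "map_mat complex_of_real M"
  have MC: "?MC \<in> carrier_mat m m" using M by simp
  obtain as where as: "char_poly ?MC = (\<Prod>a\<leftarrow>as. [:-a, 1:])" "length as = m"
    using char_poly_factorized[OF MC] by blast
  have "Im a = 0" if "a \<in> set as" for a
  proof (rule real_symmetric_eigenvalue_real[OF M sym])
    have "poly (char_poly ?MC) a = 0"
      using that unfolding as(1) poly_linear_factors by (auto simp: prod_list_zero_iff)
    then show "eigenvalue ?MC a" using eigenvalue_root_char_poly[OF MC] by simp
  qed
  then have as_real: "map complex_of_real (map Re as) = as"
    by (induction as) (auto simp: complex_eq_iff)
  have "map_poly complex_of_real (\<Prod>l\<leftarrow>map Re as. [:-l, 1:]) = (\<Prod>a\<leftarrow>as. [:-a, 1:])"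
    by (subst (2) as_real[symmetric]) (simp add: hom_prod_list o_def)
  also have "\<dots> = map_poly complex_of_real (char_poly M)"
    unfolding as(1)[symmetric] by (rule of_real_hom.char_poly_hom[OF M])
  finally have "char_poly M = (\<Prod>l\<leftarrow>map Re as. [:-l, 1:])" by simp
  then show ?thesis using that[of "map Re as"] as(2) by simp
qed

lemma eigenvalues_desc_real_symmetric:
  fixes M :: "real mat"
  assumes M: "M \<in> carrier_mat m m" and sym: "transpose_mat M = M"
  shows "length (eigenvalues_desc M) = m" "sorted_wrt (\<ge>) (eigenvalues_desc M)"
    "char_poly M = (\<Prod>l\<leftarrow>eigenvalues_desc M. [:-l, 1:])"
proof -
  obtain ls where ls: "length ls = m" "char_poly M = (\<Prod>l\<leftarrow>ls. [:-l, 1:])"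
    using char_poly_real_symmetric_splits[OF M sym] .
  define L where "L = rev (sort ls)"
  have L: "length L = dim_row M \<and> sorted_wrt (\<ge>) L \<and> char_poly M = (\<Prod>l\<leftarrow>L. [:-l, 1:])"
    using ls M unfolding L_def sorted_wrt_rev
    by (auto intro!: arg_cong[where f=prod_mset] simp: prod_mset_prod_list[symmetric] mset_map)
  have "L' = L"
    if "length L' = dim_row M \<and> sorted_wrt (\<ge>) L' \<and> char_poly M = (\<Prod>l\<leftarrow>L'. [:-l, 1:])" for L'
  proof -
    have "mset L' = mset ls" using that ls(2) linear_factors_eq_imp_mset_eq by metis
    moreover have "sorted (rev L')" using that by (simp add: sorted_wrt_rev)
    ultimately have "sort ls = rev L'" by (intro properties_for_sort) simp_all
    then show ?thesis unfolding L_def by simp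
  qed
  then have "eigenvalues_desc M = L" unfolding eigenvalues_desc_def using L by blast
  then show "length (eigenvalues_desc M) = m" "sorted_wrt (\<ge>) (eigenvalues_desc M)"
    "char_poly M = (\<Prod>l\<leftarrow>eigenvalues_desc M. [:-l, 1:])" using L M by auto
qed

lemma sorted_desc_nth_le_iff:
  fixes ls :: "'a::linorder list"
  assumes sorted: "sorted_wrt (\<ge>) ls" and i: "i < length ls"
  shows "ls ! i \<le> t \<longleftrightarrow> length (filter (\<lambda>l. l > t) ls) \<le> i"
proof -
  have anti: "ls ! k \<le> ls ! j" if "j \<le> k" "k < length ls" for j k
    using sorted_wrt_nth_less[OF sorted, of j k] that by (cases "j = k") auto
  have count: "length (filter (\<lambda>l. l > t) ls) = card {j. j < length ls \<and> ls ! j > t}"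
    by (rule length_filter_conv_card)
  show ?thesis
  proof
    assume le: "ls ! i \<le> t"
    have "{j. j < length ls \<and> ls ! j > t} \<subseteq> {..<i}"
    proof
      fix j assume j: "j \<in> {j. j < length ls \<and> ls ! j > t}"
      show "j \<in> {..<i}"
      proof (rule ccontr)
        assume "j \<notin> {..<i}"
        then have "ls ! j \<le> ls ! i" using anti j by simp
        then have "ls ! j \<le> t" using le by (rule order.trans)
        then show False using j leD by blast
      qed
    qed
    then show "length (filter (\<lambda>l. l > t) ls) \<le> i"
      unfolding count using card_mono[of "{..<i}"] by fastforce
  next
    assume le: "length (filter (\<lambda>l. l > t) ls) \<le> i"
    show "ls ! i \<le> t"
    proof (rule ccontr)
      assume gt: "\<not> ls ! i \<le> t"
      have "{..i} \<subseteq> {j. j < length ls \<and> ls ! j > t}"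
      proof
        fix j assume "j \<in> {..i}"
        then have "ls ! i \<le> ls ! j" "j < length ls" using anti i by auto
        moreover have "t < ls ! i" using gt by (simp add: not_le)
        ultimately show "j \<in> {j. j < length ls \<and> ls ! j > t}" using order.strict_trans2 by blast
      qed
      then have "card {..i} \<le> card {j. j < length ls \<and> ls ! j > t}" by (intro card_mono) auto
      then show False using le count by simp
    qed
  qed
qed

lemma pcompose_linear_factors:
  "pcompose (\<Prod>l\<leftarrow>ls. [:-l, 1:]) [:t, 1:] = (\<Prod>l\<leftarrow>ls. [:-(l - t), 1:])"
  for ls :: "'a::comm_ring_1 list"
  by (induction ls) (simp_all add: pcompose_mult pcompose_pCons del: mult_pCons_left)

lemma eigenvalue_le_iff_no_alternation:
  fixes M :: "real mat"
  assumes M: "M \<in> carrier_mat m m" "transpose_mat M = M" and i: "i < m"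
  shows "eigenvalues_desc M ! i \<le> t \<longleftrightarrow>
    \<not> (\<exists>f. alternating_indices (coeff (pcompose (char_poly M) [:t, 1:])) (Suc i) f)"
proof -
  let ?ls = "eigenvalues_desc M"
  note ev = eigenvalues_desc_real_symmetric[OF M]
  have shifted: "pcompose (char_poly M) [:t, 1:] = (\<Prod>\<mu>\<leftarrow>map (\<lambda>l. l - t) ?ls. [:-\<mu>, 1:])"
    unfolding ev(3) pcompose_linear_factors by (simp add: o_def)
  have "?ls ! i \<le> t \<longleftrightarrow> length (filter (\<lambda>l. l > t) ?ls) \<le> i"
    using sorted_desc_nth_le_iff[OF ev(2)] i ev(1) by simp
  also have "length (filter (\<lambda>l. l > t) ?ls) = length (filter (\<lambda>\<mu>. \<mu> > 0) (map (\<lambda>l. l - t) ?ls))"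
    by (simp add: filter_map o_def)
  also have "\<dots> = sign_changes (coeff (pcompose (char_poly M) [:t, 1:]))"
    unfolding shifted by (rule sign_changes_linear_factors[symmetric])
  also have "\<dots> \<le> i \<longleftrightarrow>
      \<not> (\<exists>f. alternating_indices (coeff (pcompose (char_poly M) [:t, 1:])) (Suc i) f)"
    unfolding shifted by (rule sign_changes_le_iff[OF vanishes_above_linear_factors])
  finally show ?thesis .
qed

definition gram_mat :: "'a::comm_ring_1 mat \<Rightarrow> 'a mat" where
  "gram_mat L = L * transpose_mat L"

lemma gram_mat_carrier: "L \<in> carrier_mat m n \<Longrightarrow> gram_mat L \<in> carrier_mat m m"
  unfolding gram_mat_def by simp

lemma transpose_gram_mat: "L \<in> carrier_mat m n \<Longrightarrow> transpose_mat (gram_mat L) = gram_mat L"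
  unfolding gram_mat_def by (simp add: transpose_mult[of L m n])

lemma index_gram_mat:
  assumes "L \<in> carrier_mat m n" "i < m" "j < m"
  shows "gram_mat L $$ (i, j) = (\<Sum>k<n. L $$ (i, k) * L $$ (j, k))"
  using assms unfolding gram_mat_def
    by (auto simp: scalar_prod_def atLeast0LessThan intro!: sum.cong)

lemma singular_value_le_iff:
  assumes L: "L \<in> carrier_mat m n" and "0 \<le> \<Lambda>" "i < m"
  shows "singular_value L i \<le> \<Lambda> \<longleftrightarrow>
    \<not> (\<exists>f. alternating_indices (coeff (pcompose (char_poly (gram_mat L)) [:\<Lambda>\<^sup>2, 1:])) (Suc i) f)"
proof -
  have "singular_value L i \<le> \<Lambda> \<longleftrightarrow> sqrt (eigenvalues_desc (gram_mat L) ! i) \<le> sqrt (\<Lambda>\<^sup>2)"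
    unfolding singular_value_def gram_mat_def using \<open>0 \<le> \<Lambda>\<close> by simp
  also have "\<dots> \<longleftrightarrow> eigenvalues_desc (gram_mat L) ! i \<le> \<Lambda>\<^sup>2" by (rule real_sqrt_le_iff)
  also have "\<dots> \<longleftrightarrow>
      \<not> (\<exists>f. alternating_indices (coeff (pcompose (char_poly (gram_mat L)) [:\<Lambda>\<^sup>2, 1:])) (Suc i) f)"
    using gram_mat_carrier[OF L] transpose_gram_mat[OF L] \<open>i < m\<close>
    by (rule eigenvalue_le_iff_no_alternation)
  finally show ?thesis .
qed

section \<open>The set of points with bounded singular values\<close>

lemma jacobian_carrier: "jacobian n m p x \<in> carrier_mat m n"
  unfolding jacobian_def by simp

lemma poly_fun_gram_jacobian:
  assumes p: "poly_map n m d p" and "j < m" "k < m"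
  shows "poly_fun n (d + d) (\<lambda>x. gram_mat (jacobian n m p x) $$ (j, k))"
proof -
  have "gram_mat (jacobian n m p x) $$ (j, k) =
      (\<Sum>i<n. deriv (\<lambda>t. p j (x(i := t))) (x i) * deriv (\<lambda>t. p k (x(i := t))) (x i))" for x
    using index_gram_mat[OF jacobian_carrier \<open>j < m\<close> \<open>k < m\<close>] \<open>j < m\<close> \<open>k < m\<close>
    by (simp add: jacobian_def)
  moreover have "poly_fun n (d + d)
      (\<lambda>x. \<Sum>i<n. deriv (\<lambda>t. p j (x(i := t))) (x i) * deriv (\<lambda>t. p k (x(i := t))) (x i))"
    using p \<open>j < m\<close> \<open>k < m\<close> unfolding poly_map_def
    by (intro poly_fun_sum poly_fun_mult poly_fun_partial_deriv) auto
  ultimately show ?thesis by simp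
qed

definition jacobian_char_coeff ::
    "nat \<Rightarrow> nat \<Rightarrow> (nat \<Rightarrow> (nat \<Rightarrow> real) \<Rightarrow> real) \<Rightarrow> real \<Rightarrow> nat \<Rightarrow> (nat \<Rightarrow> real) \<Rightarrow> real" where
  "jacobian_char_coeff n m p t k x =
     coeff (pcompose (char_poly (gram_mat (jacobian n m p x))) [:t, 1:]) k"

lemma poly_fun_jacobian_char_coeff:
  "poly_map n m d p \<Longrightarrow> poly_fun n (m * (d + d)) (jacobian_char_coeff n m p t k)"
  unfolding jacobian_char_coeff_def[abs_def]
  by (intro poly_fun_shifted_char_poly_coeff gram_mat_carrier[OF jacobian_carrier]
      poly_fun_gram_jacobian)

lemma jacobian_char_coeff_eq_0: "m < k \<Longrightarrow> jacobian_char_coeff n m p t k x = 0"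
  unfolding jacobian_char_coeff_def
  using degree_monic_char_poly[OF gram_mat_carrier[OF jacobian_carrier]]
  by (simp add: coeff_eq_0 degree_pcompose)

lemma C_Lambda_altdef:
  assumes "\<forall>i<m. \<Lambda> i \<ge> 0"
  shows "C_Lambda n m \<Lambda> p = {x \<in> Rn n. \<forall>i<m.
           \<not> (\<exists>f. alternating_indices (\<lambda>k. jacobian_char_coeff n m p ((\<Lambda> i)\<^sup>2) k x) (Suc i) f)}"
  unfolding C_Lambda_def jacobian_char_coeff_def
  using singular_value_le_iff[OF jacobian_carrier] assms by auto

lemma closed_Rn: "closed (Rn n)"
proof -
  have "Rn n = (\<Inter>i\<in>{n..}. {x. x i = 0})" unfolding Rn_def by auto
  then show ?thesis
    by (simp only:) (intro closed_INT ballI closed_Collect_eq continuous_on_product_coordinates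
        continuous_on_const)
qed

lemma open_alternating_indices:
  assumes "\<And>k. continuous_on UNIV (c k)"
  shows "open {x. alternating_indices (\<lambda>k. c k x) r f}"
proof -
  have "{x. alternating_indices (\<lambda>k. c k x) r f} =
      (\<Inter>k\<in>{..<r}. {x. f k < f (Suc k) \<and> c (f k) x * c (f (Suc k)) x < 0})"
    unfolding alternating_indices_def by auto
  moreover have "open {x. f k < f (Suc k) \<and> c (f k) x * c (f (Suc k)) x < 0}" for k
    by (cases "f k < f (Suc k)")
      (simp_all add: open_Collect_less continuous_on_mult assms continuous_on_const)
  ultimately show ?thesis by (simp add: open_INT)
qed

lemma closed_C_Lambda:
  assumes "poly_map n m d p" "\<forall>i<m. \<Lambda> i \<ge> 0"
  shows "closed (C_Lambda n m \<Lambda> p)"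
proof -
  have "C_Lambda n m \<Lambda> p = Rn n \<inter> (\<Inter>i\<in>{..<m}. \<Inter>f.
      - {x. alternating_indices (\<lambda>k. jacobian_char_coeff n m p ((\<Lambda> i)\<^sup>2) k x) (Suc i) f})"
    unfolding C_Lambda_altdef[OF assms(2)] by auto
  moreover have "continuous_on UNIV (jacobian_char_coeff n m p t k)" for t k
    using continuous_on_poly_fun[OF poly_fun_jacobian_char_coeff[OF assms(1)]] .
  ultimately show ?thesis
    by (simp add: closed_Int closed_Rn closed_INT closed_Compl open_alternating_indices)
qed

lemma semialg_diagramI:
  assumes "\<And>a j. a < A \<Longrightarrow> j < B \<Longrightarrow> poly_fun n d (q a j) \<and> \<sigma> a j \<in> {0, 1, -1}"
    and "S = (\<Union>a<A. {x \<in> Rn n. \<forall>j<B. sgn (q a j x) = \<sigma> a j})"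
  shows "semialg_diagram n (A * B) d S"
  unfolding semialg_diagram_def
proof (intro exI conjI)
  show "\<forall>a<A. \<forall>j<B. poly_fun n d (q a j) \<and> \<sigma> a j \<in> {0, 1, -1}" using assms(1) by blast
  show "A * Max ((\<lambda>_. B) ` {..<A}) \<le> A * B"
    by (cases "A = 0") (simp_all add: image_constant_conv lessThan_empty_iff)
qed (fact assms(2))

lemma semialg_diagram_sign_condition:
  assumes q: "\<And>j. j < N \<Longrightarrow> poly_fun n d (q j)"
    and S: "S = {x \<in> Rn n. P (map (\<lambda>j. sgn (q j x)) [0..<N])}"
  shows "semialg_diagram n (3 ^ N * Suc N) d S"
proof -
  txt \<open>One clause per sign vector s.  The constant polynomial 1 appended as the last condition,
    with prescribed sign 1 if P s holds and 0 otherwise, makes the clauses of the other sign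
    vectors unsatisfiable.\<close>
  define signs where "signs = List.n_lists N [-1, 0, 1::real]"
  define q' where "q' a j = (if j < N then q j else (\<lambda>_. 1))" for a j :: nat
  define \<sigma> where "\<sigma> a j = (if j < N then signs ! a ! j else if P (signs ! a) then 1 else 0)" for a j
  have len: "length signs = 3 ^ N" unfolding signs_def by (simp add: length_n_lists numeral_3_eq_3)
  have set_signs: "s \<in> set signs \<longleftrightarrow> length s = N \<and> set s \<subseteq> {-1, 0, 1}" for s
    unfolding signs_def by (auto simp: set_n_lists)
  define sign_vec where "sign_vec x = map (\<lambda>j. sgn (q j x)) [0..<N]" for x
  have cond: "(\<forall>j<Suc N. sgn (q' a j x) = \<sigma> a j) \<longleftrightarrow> signs ! a = sign_vec x \<and> P (signs ! a)"
    if a: "a < length signs" for a x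
  proof -
    have "(\<forall>j<Suc N. sgn (q' a j x) = \<sigma> a j) \<longleftrightarrow> (\<forall>j<N. sgn (q j x) = signs ! a ! j) \<and> P (signs ! a)"
      unfolding q'_def \<sigma>_def by (auto simp: less_Suc_eq)
    also have "(\<forall>j<N. sgn (q j x) = signs ! a ! j) \<longleftrightarrow> signs ! a = sign_vec x"
      using nth_mem[OF a] set_signs unfolding sign_vec_def by (auto simp: list_eq_iff_nth_eq)
    finally show ?thesis .
  qed
  have mem: "x \<in> S \<longleftrightarrow> (\<exists>a<length signs. x \<in> Rn n \<and> (\<forall>j<Suc N. sgn (q' a j x) = \<sigma> a j))" for x
  proof
    assume "x \<in> S"
    then have "x \<in> Rn n" "P (sign_vec x)" unfolding S sign_vec_def by auto
    moreover have "sign_vec x \<in> set signs" unfolding set_signs sign_vec_def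
      by (auto simp: sgn_real_def)
    then obtain a where "a < length signs" "signs ! a = sign_vec x" by (metis in_set_conv_nth)
    ultimately show "\<exists>a<length signs. x \<in> Rn n \<and> (\<forall>j<Suc N. sgn (q' a j x) = \<sigma> a j)"
      using cond[of a x] by auto
  next
    assume "\<exists>a<length signs. x \<in> Rn n \<and> (\<forall>j<Suc N. sgn (q' a j x) = \<sigma> a j)"
    then show "x \<in> S" unfolding S sign_vec_def[symmetric] using cond by auto
  qed
  have polys: "poly_fun n d (q' a j) \<and> \<sigma> a j \<in> {0, 1, -1}" if "a < length signs" "j < Suc N" for a j
  proof -
    have "set (signs ! a) \<subseteq> {-1, 0, 1}" "length (signs ! a) = N"
      using nth_mem[OF that(1)] set_signs by auto
    then have "signs ! a ! j \<in> {-1, 0, 1}" if "j < N" using that nth_mem by blast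
    then show ?thesis using q unfolding q'_def \<sigma>_def by (auto simp: poly_fun_const)
  qed
  have "S = (\<Union>a<length signs. {x \<in> Rn n. \<forall>j<Suc N. sgn (q' a j x) = \<sigma> a j})"
    using mem by blast
  with polys have "semialg_diagram n (length signs * Suc N) d S"
    by (rule semialg_diagramI)
  then show ?thesis using len by simp
qed

lemma mixed_radix_index:
  fixes a b i k :: nat
  assumes "i < a" "k < b"
  shows "i * b + k < a * b" "(i * b + k) div b = i" "(i * b + k) mod b = k"
proof -
  have "i * b + k < Suc i * b" using assms(2) by simp
  also have "\<dots> \<le> a * b" using assms(1) by (intro mult_right_mono) auto
  finally show "i * b + k < a * b" .
  have "(i * b + k) div b = i + k div b" by (rule div_mult_self3) (use assms(2) in simp)
  then show "(i * b + k) div b = i" using assms(2) by simp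
  have "(i * b + k) mod b = k mod b" by (rule mod_mult_self3)
  then show "(i * b + k) mod b = k" using assms(2) by simp
qed

lemma semialg_diagram_C_Lambda:
  assumes p: "poly_map n m d p" and \<Lambda>: "\<forall>i<m. \<Lambda> i \<ge> 0"
  shows "semialg_diagram n (3 ^ (m * Suc m) * Suc (m * Suc m)) (m * (d + d)) (C_Lambda n m \<Lambda> p)"
proof -
  txt \<open>Polynomial number i * (m + 1) + k is the k-th coefficient tested for the i-th singular
    value; coefficients beyond m vanish.\<close>
  define q where "q j = jacobian_char_coeff n m p ((\<Lambda> (j div Suc m))\<^sup>2) (j mod Suc m)" for j
  define sv where "sv x = map (\<lambda>j. sgn (q j x)) [0..<m * Suc m]" for x
  define P where "P s \<longleftrightarrow> (\<forall>i<m. \<not> (\<exists>f.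
    alternating_indices (\<lambda>k. if k \<le> m then s ! (i * Suc m + k) else 0) (Suc i) f))" for s
  have "alternating_indices (\<lambda>k. jacobian_char_coeff n m p ((\<Lambda> i)\<^sup>2) k x) r f \<longleftrightarrow>
      alternating_indices (\<lambda>k. if k \<le> m then sv x ! (i * Suc m + k) else 0) r f"
    if "i < m" for i x r f
  proof (rule alternating_indices_sgn_cong)
    fix k
    show "sgn (jacobian_char_coeff n m p ((\<Lambda> i)\<^sup>2) k x) =
      sgn (if k \<le> m then sv x ! (i * Suc m + k) else 0)"
    proof (cases "k \<le> m")
      case True
      then have "k < Suc m" by simp
      note ix = mixed_radix_index[OF that this]
      have "q (i * Suc m + k) = jacobian_char_coeff n m p ((\<Lambda> i)\<^sup>2) k"
        unfolding q_def by (simp only: ix(2,3))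
      moreover have "sv x ! (i * Suc m + k) = sgn (q (i * Suc m + k) x)"
        using ix(1) unfolding sv_def by simp
      ultimately show ?thesis using True by simp
    qed (simp add: jacobian_char_coeff_eq_0)
  qed
  then have "C_Lambda n m \<Lambda> p = {x \<in> Rn n. P (sv x)}"
    unfolding C_Lambda_altdef[OF \<Lambda>] P_def by auto
  moreover have "poly_fun n (m * (d + d)) (q j)" for j
    unfolding q_def by (rule poly_fun_jacobian_char_coeff[OF p])
  ultimately show ?thesis unfolding sv_def by (intro semialg_diagram_sign_condition)
qed

theorem proposition3p16:
  fixes d m :: nat
  shows "\<exists>c' d' :: nat. \<forall>n \<ge> m. \<forall>p \<Lambda>.
           poly_map n m d p \<longrightarrow> (\<forall>i<m. \<Lambda> i \<ge> 0) \<longrightarrow>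
           closed (C_Lambda n m \<Lambda> p) \<and> semialg_diagram n c' d' (C_Lambda n m \<Lambda> p)"
  using closed_C_Lambda semialg_diagram_C_Lambda by blast

end
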